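(* Let $P$ be an instance of $k$-means clustering with $z$ outliers, $|P|=n$, let $\delta,\xi\in(0,1)$, let $S$ be a finite multiset of points of $P$ satisfying, for every $1\le j\le k$, $$\sum_{q\in S\cap C^*_j}\|q-o^*_j\|^2\le(1+\delta)\frac{|S|}{n}\Big(\sum_{p\in C^*_j}\|p-o^*_j\|^2+\xi|C^*_j|\mathcal{L}^2\Big),$$ let $0<z'<|S|$ with $|S\setminus P_{opt}|\le z'$, let $H$ be a set of $k$ centers in $\mathbb{R}^D$ with $\Delta^{-z'}_2(S,H)\le c\cdot\min_{|H'|=k}\Delta^{-z'}_2(S,H')$ for some $c\ge1$, and let $S_{in}\subseteq S$ be the $|S|-z'$ points of $S$ attaining $\Delta^{-z'}_2(S,H)$ (i.e., $S$ minus its $z'$ points farthest from $H$). Then $$Cost(S_{in}\cap P_{opt},H)\le(1+\delta)\frac{|S|}{n}\cdot c\cdot\big(Cost(P_{opt},O^* )+(n-z)\xi\mathcal{L}^2\big).$$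
   Context: $P\subset\mathbb{R}^D$, $0<z<n$. $dist(p,H)=\min_{q\in H}\|p-q\|$; for a finite multiset $Q$ and $0<w<|Q|$, $\Delta^{-w}_2(Q,H)=\min\{\frac{1}{|Q'|}\sum_{p\in Q'}dist(p,H)^2:Q'\subseteq Q,|Q'|=|Q|-w\}$; $Cost(X,Y)=\sum_{q\in X}dist(q,Y)^2$ (with multiplicity). $P_{opt}\subset P$ with $|P_{opt}|=n-z$ is the set of inliers of an optimal solution of $k$-means with $z$ outliers, $C^*_1,\dots,C^*_k$ the optimal clusters forming $P_{opt}$, $o^*_j$ the mean of $C^*_j$, $O^*=\{o^*_1,\dots,o^*_k\}$, $\mathcal{L}=\max_j\max_{p,q\in C^*_j}\|p-q\|$. *)

theory Defs
  imports "HOL-Analysis.Analysis" "HOL-Library.Multiset"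
begin

definition kcost :: "'a::euclidean_space multiset \<Rightarrow> 'a set \<Rightarrow> real" where
  "kcost X Y = sum_mset (image_mset (\<lambda>q. (infdist q Y)\<^sup>2) X)"

definition trimmed_avg :: "'a::euclidean_space multiset \<Rightarrow> nat \<Rightarrow> 'a set \<Rightarrow> real" where
  "trimmed_avg Q w H =
     Min ((\<lambda>Q'. kcost Q' H / real (size Q')) ` {Q'. Q' \<subseteq># Q \<and> size Q' = size Q - w})"

definition opt_kmeans_outliers ::
  "'a::euclidean_space set \<Rightarrow> nat \<Rightarrow> nat \<Rightarrow> 'a set \<Rightarrow> (nat \<Rightarrow> 'a set) \<Rightarrow> (nat \<Rightarrow> 'a) \<Rightarrow> bool" where
  "opt_kmeans_outliers P k z Popt C ctr \<longleftrightarrow>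
     Popt \<subseteq> P \<and> card Popt = card P - z \<and>
     (\<forall>j\<in>{1..k}. C j \<noteq> {}) \<and>
     (\<forall>i\<in>{1..k}. \<forall>j\<in>{1..k}. i \<noteq> j \<longrightarrow> C i \<inter> C j = {}) \<and>
     (\<Union>j\<in>{1..k}. C j) = Popt \<and>
     (\<forall>j\<in>{1..k}. \<forall>p\<in>C j. \<forall>i\<in>{1..k}. dist p (ctr j) \<le> dist p (ctr i)) \<and>
     (\<forall>j\<in>{1..k}. ctr j = (1 / real (card (C j))) *\<^sub>R (\<Sum>p\<in>C j. p)) \<and>
     (\<forall>Q H. Q \<subseteq> P \<longrightarrow> card Q = card P - z \<longrightarrow> finite H \<longrightarrow> card H = k \<longrightarrow>
        kcost (mset_set Popt) (ctr ` {1..k}) \<le> kcost (mset_set Q) H)"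

definition clusters_diam :: "nat \<Rightarrow> (nat \<Rightarrow> 'a::euclidean_space set) \<Rightarrow> real" where
  "clusters_diam k C = Max {dist p q | j p q. j \<in> {1..k} \<and> p \<in> C j \<and> q \<in> C j}"

end

theory Submission
  imports Defs
begin

text \<open>Compare H with the optimal centres O* on S. Summing the hypothesis over the clusters,
  the inliers of S cost at most B = (1 + \<delta>) |S|/n (Cost(P_opt, O*) + (n - z) \<xi> L^2) with
  respect to O*. As at most z' points of S are outliers, |S| - z' of these inliers witness
  Delta^{-z'}_2(S, O*) \<le> B / (|S| - z'). Padding O* to exactly k centres only lowers distances,
  so the c-approximation H has trimmed average at most c B / (|S| - z'), and S_in consists of
  exactly |S| - z' points.\<close>

lemma exists_submset_of_size:
  "n \<le> size M \<Longrightarrow> \<exists>M'. M' \<subseteq># M \<and> size M' = n"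
proof (induction M arbitrary: n)
  case empty
  then show ?case by auto
next
  case (add x M)
  show ?case
  proof (cases "n \<le> size M")
    case True
    then obtain M' where "M' \<subseteq># M" "size M' = n" using add.IH by blast
    moreover have "M \<subseteq># add_mset x M" by simp
    ultimately show ?thesis using subset_mset.order_trans by blast
  next
    case False
    then have "n = size (add_mset x M)" using add.prems by simp
    then show ?thesis by blast
  qed
qed

lemma finite_submsets_of_size: "finite {M'. M' \<subseteq># M \<and> size M' = n}"
proof (rule finite_subset)
  show "{M'. M' \<subseteq># M \<and> size M' = n} \<subseteq> multisets_of_size (set_mset M) n"
    by (auto simp: multisets_of_size_def dest: mset_subset_eqD)
qed auto

lemma sum_mset_nonneg:
  fixes f :: "'a \<Rightarrow> 'b::ordered_comm_monoid_add"
  shows "(\<And>x. x \<in># M \<Longrightarrow> 0 \<le> f x) \<Longrightarrow> 0 \<le> sum_mset (image_mset f M)"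
  by (induction M) auto

lemma sum_mset_mono_submset:
  fixes f :: "'a \<Rightarrow> 'b::ordered_comm_monoid_add"
  assumes "M' \<subseteq># M" and "\<And>x. x \<in># M \<Longrightarrow> 0 \<le> f x"
  shows "sum_mset (image_mset f M') \<le> sum_mset (image_mset f M)"
proof -
  have "sum_mset (image_mset f M) = sum_mset (image_mset f M') + sum_mset (image_mset f (M - M'))"
    using assms(1) by (metis image_mset_union subset_mset.add_diff_inverse sum_mset.union)
  moreover have "0 \<le> sum_mset (image_mset f (M - M'))"
    using assms(2) by (intro sum_mset_nonneg) (auto dest: in_diffD)
  ultimately show ?thesis by (metis add_increasing2 order_refl)
qed

lemma sum_mset_sum_swap:
  "sum_mset (image_mset (\<lambda>x. \<Sum>j\<in>J. f x j) M) = (\<Sum>j\<in>J. sum_mset (image_mset (\<lambda>x. f x j) M))"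
  by (induction M) (auto simp: sum.distrib)

lemma sum_mset_if_eq_filter:
  "sum_mset (image_mset (\<lambda>x. if P x then f x else 0) M) = sum_mset (image_mset f (filter_mset P M))"
  by (induction M) auto

lemma infinite_UNIV_euclidean: "infinite (UNIV :: 'a::euclidean_space set)"
proof
  assume fin: "finite (UNIV :: 'a set)"
  obtain b :: 'a where "b \<in> Basis" using nonempty_Basis by blast
  then have "inj (\<lambda>r::real. r *\<^sub>R b)" by (auto intro!: injI)
  then have "infinite (range (\<lambda>r::real. r *\<^sub>R b))"
    using finite_imageD infinite_UNIV_char_0 by blast
  then show False using fin by (meson finite_subset top_greatest)
qed

lemma exists_superset_of_card:
  assumes "infinite (UNIV :: 'a set)" and "finite (A :: 'a set)" and "card A \<le> k"
  shows "\<exists>B. A \<subseteq> B \<and> finite B \<and> card B = k"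
proof -
  have "infinite (UNIV - A)" using assms(1,2) by auto
  then obtain E where E: "finite E" "card E = k - card A" "E \<subseteq> UNIV - A"
    using infinite_arbitrarily_large by blast
  have "card (A \<union> E) = k" using E assms(2,3) by (subst card_Un_disjoint) auto
  moreover have "A \<subseteq> A \<union> E" "finite (A \<union> E)" using E assms(2) by auto
  ultimately show ?thesis by blast
qed

lemma infdist_eq_dist_nearest:
  assumes "y \<in> Y" and "\<And>y'. y' \<in> Y \<Longrightarrow> dist x y \<le> dist x y'"
  shows "infdist x Y = dist x y"
proof (rule antisym)
  show "infdist x Y \<le> dist x y" using assms(1) by (rule infdist_le)
  have "Y \<noteq> {}" using assms(1) by blast
  then show "dist x y \<le> infdist x Y"
    unfolding infdist_notempty[OF \<open>Y \<noteq> {}\<close>] using assms(2) by (rule cINF_greatest)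
qed

lemma kcost_mono_submset: "X' \<subseteq># X \<Longrightarrow> kcost X' Y \<le> kcost X Y"
  unfolding kcost_def by (rule sum_mset_mono_submset) auto

lemma kcost_antimono_centers:
  assumes "Y \<subseteq> Y'" and "Y \<noteq> {}"
  shows "kcost X Y' \<le> kcost X Y"
  unfolding kcost_def using assms by (intro sum_mset_mono power_mono infdist_mono infdist_nonneg)

lemma kcost_partition:
  assumes "finite I" and "disjoint_family_on C I" and "set_mset M \<subseteq> (\<Union>j\<in>I. C j)"
    and nearest: "\<And>j x. j \<in> I \<Longrightarrow> x \<in> C j \<Longrightarrow> infdist x Y = dist x (c j)"
  shows "kcost M Y
    = (\<Sum>j\<in>I. sum_mset (image_mset (\<lambda>x. (norm (x - c j))\<^sup>2) (filter_mset (\<lambda>x. x \<in> C j) M)))"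
proof -
  have pointwise: "(infdist x Y)\<^sup>2 = (\<Sum>j\<in>I. if x \<in> C j then (norm (x - c j))\<^sup>2 else 0)"
    if x: "x \<in># M" for x
  proof -
    obtain i where i: "i \<in> I" "x \<in> C i" using x assms(3) by blast
    have "x \<in> C j \<longleftrightarrow> j = i" if "j \<in> I" for j
      using i that assms(2) by (auto simp: disjoint_family_on_def)
    then have "(\<Sum>j\<in>I. if x \<in> C j then (norm (x - c j))\<^sup>2 else 0)
        = (\<Sum>j\<in>I. if j = i then (norm (x - c j))\<^sup>2 else 0)"
      by (intro sum.cong) auto
    also have "\<dots> = (norm (x - c i))\<^sup>2"
      using i(1) \<open>finite I\<close> by (simp add: sum.delta')
    finally show ?thesis using nearest[OF i] by (simp add: dist_norm)
  qed
  have "kcost M Y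
      = sum_mset (image_mset (\<lambda>x. \<Sum>j\<in>I. if x \<in> C j then (norm (x - c j))\<^sup>2 else 0) M)"
    unfolding kcost_def using pointwise by (intro arg_cong[where f = sum_mset] image_mset_cong)
  then show ?thesis by (simp add: sum_mset_sum_swap sum_mset_if_eq_filter)
qed

lemma trimmed_avg_le:
  assumes "Q' \<subseteq># Q" and "size Q' = size Q - w"
  shows "trimmed_avg Q w Y \<le> kcost Q' Y / real (size Q')"
  unfolding trimmed_avg_def using assms by (intro Min_le finite_imageI finite_submsets_of_size) auto

lemma trimmed_avg_attained:
  obtains Q' where "Q' \<subseteq># Q" "size Q' = size Q - w"
    "trimmed_avg Q w Y = kcost Q' Y / real (size Q')"
proof -
  have "{Q'. Q' \<subseteq># Q \<and> size Q' = size Q - w} \<noteq> {}"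
    using exists_submset_of_size[of "size Q - w" Q] by auto
  then have "trimmed_avg Q w Y
      \<in> (\<lambda>Q'. kcost Q' Y / real (size Q')) ` {Q'. Q' \<subseteq># Q \<and> size Q' = size Q - w}"
    unfolding trimmed_avg_def by (intro Min_in finite_imageI finite_submsets_of_size) auto
  then show ?thesis using that by auto
qed

lemma trimmed_avg_nonneg: "0 \<le> trimmed_avg Q w Y"
  by (rule trimmed_avg_attained[of Q w Y]) (auto simp: kcost_def intro!: divide_nonneg_nonneg sum_mset_nonneg)

lemma trimmed_avg_antimono_centers:
  assumes "Y \<subseteq> Y'" and "Y \<noteq> {}"
  shows "trimmed_avg Q w Y' \<le> trimmed_avg Q w Y"
proof -
  obtain Q' where Q': "Q' \<subseteq># Q" "size Q' = size Q - w"
    and attained: "trimmed_avg Q w Y = kcost Q' Y / real (size Q')"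
    by (rule trimmed_avg_attained)
  have "trimmed_avg Q w Y' \<le> kcost Q' Y' / real (size Q')" using Q' by (rule trimmed_avg_le)
  also have "\<dots> \<le> kcost Q' Y / real (size Q')"
    using assms by (intro divide_right_mono kcost_antimono_centers) auto
  finally show ?thesis using attained by simp
qed

lemma Inf_trimmed_avg_le:
  fixes Y :: "'a::euclidean_space set"
  assumes "finite Y" and "Y \<noteq> {}" and "card Y \<le> k"
  shows "Inf {trimmed_avg Q w H' | H'. finite H' \<and> card H' = k} \<le> trimmed_avg Q w Y"
proof -
  obtain Y' where Y': "Y \<subseteq> Y'" "finite Y'" "card Y' = k"
    using exists_superset_of_card[OF infinite_UNIV_euclidean assms(1,3)] by blast
  have "Inf {trimmed_avg Q w H' | H'. finite H' \<and> card H' = k} \<le> trimmed_avg Q w Y'"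
    using Y' trimmed_avg_nonneg by (intro cInf_lower bdd_belowI[of _ 0]) auto
  also have "\<dots> \<le> trimmed_avg Q w Y" using Y'(1) assms(2) by (rule trimmed_avg_antimono_centers)
  finally show ?thesis .
qed

lemma trimmed_avg_le_kcost_inliers:
  assumes "size (filter_mset (\<lambda>q. q \<notin> A) Q) \<le> w"
  shows "trimmed_avg Q w Y \<le> kcost (filter_mset (\<lambda>q. q \<in> A) Q) Y / real (size Q - w)"
proof -
  have "size (filter_mset (\<lambda>q. q \<in> A) Q) + size (filter_mset (\<lambda>q. q \<notin> A) Q) = size Q"
    by (metis multiset_partition size_union)
  then obtain Q' where Q': "Q' \<subseteq># filter_mset (\<lambda>q. q \<in> A) Q" "size Q' = size Q - w"
    using assms exists_submset_of_size by (metis add_diff_cancel_right' diff_le_mono2)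
  then have "Q' \<subseteq># Q" using multiset_filter_subset subset_mset.order_trans by blast
  then have "trimmed_avg Q w Y \<le> kcost Q' Y / real (size Q')" using Q'(2) by (rule trimmed_avg_le)
  also have "\<dots> \<le> kcost (filter_mset (\<lambda>q. q \<in> A) Q) Y / real (size Q - w)"
    using Q' by (auto intro: divide_right_mono kcost_mono_submset)
  finally show ?thesis .
qed

lemma opt_kmeans_outliersD:
  assumes "opt_kmeans_outliers P k z Popt C ctr"
  shows "Popt \<subseteq> P" and "card Popt = card P - z" and "disjoint_family_on C {1..k}"
    and "(\<Union>j\<in>{1..k}. C j) = Popt"
    and "\<And>j p i. j \<in> {1..k} \<Longrightarrow> p \<in> C j \<Longrightarrow> i \<in> {1..k} \<Longrightarrow> dist p (ctr j) \<le> dist p (ctr i)"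
  using assms unfolding opt_kmeans_outliers_def disjoint_family_on_def by (elim conjE; simp)+

lemma opt_kmeans_outliers_kcost_inliers:
  assumes opt: "opt_kmeans_outliers P k z Popt C ctr"
  shows "kcost (filter_mset (\<lambda>q. q \<in> Popt) M) (ctr ` {1..k})
    = (\<Sum>j\<in>{1..k}. sum_mset (image_mset (\<lambda>q. (norm (q - ctr j))\<^sup>2) (filter_mset (\<lambda>q. q \<in> C j) M)))"
proof -
  note opt' = opt_kmeans_outliersD[OF opt]
  have "kcost (filter_mset (\<lambda>q. q \<in> Popt) M) (ctr ` {1..k}) = (\<Sum>j\<in>{1..k}.
      sum_mset (image_mset (\<lambda>q. (norm (q - ctr j))\<^sup>2)
        (filter_mset (\<lambda>q. q \<in> C j) (filter_mset (\<lambda>q. q \<in> Popt) M))))"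
  proof (rule kcost_partition)
    show "finite {1..k}" by simp
    show "disjoint_family_on C {1..k}" by (rule opt'(3))
    show "set_mset (filter_mset (\<lambda>q. q \<in> Popt) M) \<subseteq> (\<Union>j\<in>{1..k}. C j)"
      unfolding opt'(4) by auto
    show "infdist q (ctr ` {1..k}) = dist q (ctr j)" if "j \<in> {1..k}" "q \<in> C j" for j q
      using that by (intro infdist_eq_dist_nearest) (auto intro: opt'(5))
  qed
  moreover have "filter_mset (\<lambda>q. q \<in> C j) (filter_mset (\<lambda>q. q \<in> Popt) M) = filter_mset (\<lambda>q. q \<in> C j) M"
    if "j \<in> {1..k}" for j
  proof -
    have "C j \<subseteq> Popt" using that opt'(4) by blast
    then show ?thesis by (auto simp: filter_filter_mset intro: filter_mset_cong)
  qed
  ultimately show ?thesis by simp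
qed

lemma opt_kmeans_outliers_kcost:
  assumes opt: "opt_kmeans_outliers P k z Popt C ctr" and "finite P"
  shows "kcost (mset_set Popt) (ctr ` {1..k}) = (\<Sum>j\<in>{1..k}. \<Sum>p\<in>C j. (norm (p - ctr j))\<^sup>2)"
proof -
  note opt' = opt_kmeans_outliersD[OF opt]
  have fin_Popt: "finite Popt" using opt'(1) \<open>finite P\<close> finite_subset by blast
  have "{p \<in> Popt. p \<in> C j} = C j" if "j \<in> {1..k}" for j using that opt'(4) by blast
  then show ?thesis
    using opt_kmeans_outliers_kcost_inliers[OF opt, of "mset_set Popt"] fin_Popt
    by (simp add: sum_unfold_sum_mset)
qed

lemma opt_kmeans_outliers_card:
  assumes opt: "opt_kmeans_outliers P k z Popt C ctr" and "finite P"
  shows "(\<Sum>j\<in>{1..k}. card (C j)) = card P - z"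
proof -
  note opt' = opt_kmeans_outliersD[OF opt]
  have "finite (C j)" if "j \<in> {1..k}" for j
    using that opt'(1,4) \<open>finite P\<close> by (meson UN_I finite_subset subsetI)
  then have "(\<Sum>j\<in>{1..k}. card (C j)) = card Popt"
    unfolding opt'(4)[symmetric] using opt'(3) by (intro card_UN_disjoint'[symmetric]) auto
  then show ?thesis using opt'(2) by simp
qed

lemma kcost_sample_inliers_le:
  assumes opt: "opt_kmeans_outliers P k z Popt C ctr" and "finite P" and "z \<le> card P"
    and sample: "\<forall>j\<in>{1..k}.
        sum_mset (image_mset (\<lambda>q. (norm (q - ctr j))\<^sup>2) (filter_mset (\<lambda>q. q \<in> C j) S))
        \<le> a * ((\<Sum>p\<in>C j. (norm (p - ctr j))\<^sup>2) + \<xi> * real (card (C j)) * L\<^sup>2)"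
  shows "kcost (filter_mset (\<lambda>q. q \<in> Popt) S) (ctr ` {1..k})
    \<le> a * (kcost (mset_set Popt) (ctr ` {1..k}) + (real (card P) - real z) * \<xi> * L\<^sup>2)"
proof -
  have "kcost (filter_mset (\<lambda>q. q \<in> Popt) S) (ctr ` {1..k})
      \<le> (\<Sum>j\<in>{1..k}. a * ((\<Sum>p\<in>C j. (norm (p - ctr j))\<^sup>2) + \<xi> * real (card (C j)) * L\<^sup>2))"
    unfolding opt_kmeans_outliers_kcost_inliers[OF opt] using sample by (intro sum_mono) blast
  also have "\<dots> = a * ((\<Sum>j\<in>{1..k}. \<Sum>p\<in>C j. (norm (p - ctr j))\<^sup>2)
      + \<xi> * L\<^sup>2 * real (\<Sum>j\<in>{1..k}. card (C j)))"
    by (simp add: sum_distrib_left sum.distrib algebra_simps)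
  also have "\<dots> = a * (kcost (mset_set Popt) (ctr ` {1..k}) + (real (card P) - real z) * \<xi> * L\<^sup>2)"
    using \<open>z \<le> card P\<close>
    by (simp only: opt_kmeans_outliers_kcost[OF opt \<open>finite P\<close>] opt_kmeans_outliers_card[OF opt \<open>finite P\<close>])
      (simp add: of_nat_diff algebra_simps)
  finally show ?thesis .
qed

theorem lemma9:
  fixes P :: "'a::euclidean_space set" and k z z' :: nat
    and Popt :: "'a set" and C :: "nat \<Rightarrow> 'a set" and ctr :: "nat \<Rightarrow> 'a"
    and S S_in :: "'a multiset" and H :: "'a set" and \<delta> \<xi> c :: real
  assumes finP: "finite P"
    and z_pos: "0 < z" and z_lt: "z < card P"
    and k_pos: "1 \<le> k"
    and opt: "opt_kmeans_outliers P k z Popt C ctr"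
    and delta: "0 < \<delta>" "\<delta> < 1" and xi: "0 < \<xi>" "\<xi> < 1"
    and S_P: "set_mset S \<subseteq> P"
    and S_good: "\<forall>j\<in>{1..k}.
        sum_mset (image_mset (\<lambda>q. (norm (q - ctr j))\<^sup>2) (filter_mset (\<lambda>q. q \<in> C j) S))
        \<le> (1 + \<delta>) * (real (size S) / real (card P)) *
           ((\<Sum>p\<in>C j. (norm (p - ctr j))\<^sup>2) + \<xi> * real (card (C j)) * (clusters_diam k C)\<^sup>2)"
    and z'_pos: "0 < z'" and z'_lt: "z' < size S"
    and S_out: "size (filter_mset (\<lambda>q. q \<notin> Popt) S) \<le> z'"
    and H_fin: "finite H" and H_card: "card H = k"
    and c_ge: "1 \<le> c"
    and H_approx: "trimmed_avg S z' H
        \<le> c * Inf {trimmed_avg S z' H' | H'. finite H' \<and> card H' = k}"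
    and S_in_sub: "S_in \<subseteq># S" and S_in_size: "size S_in = size S - z'"
    and S_in_att: "kcost S_in H / real (size S_in) = trimmed_avg S z' H"
  shows "kcost (filter_mset (\<lambda>q. q \<in> Popt) S_in) H
     \<le> (1 + \<delta>) * (real (size S) / real (card P)) * c *
        (kcost (mset_set Popt) (ctr ` {1..k})
         + (real (card P) - real z) * \<xi> * (clusters_diam k C)\<^sup>2)"
proof -
  define O_star where "O_star = ctr ` {1..k}"
  define m where "m = size S - z'"
  define B where "B = (1 + \<delta>) * (real (size S) / real (card P)) *
    (kcost (mset_set Popt) O_star + (real (card P) - real z) * \<xi> * (clusters_diam k C)\<^sup>2)"
  have m_pos: "0 < m" using z'_lt by (simp add: m_def)
  have inliers: "kcost (filter_mset (\<lambda>q. q \<in> Popt) S) O_star \<le> B"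
    unfolding B_def O_star_def using opt finP z_lt S_good by (intro kcost_sample_inliers_le) auto
  have "trimmed_avg S z' H \<le> c * Inf {trimmed_avg S z' H' | H'. finite H' \<and> card H' = k}"
    by (rule H_approx)
  also have "\<dots> \<le> c * trimmed_avg S z' O_star"
    using c_ge k_pos card_image_le[of "{1..k}" ctr]
    by (intro mult_left_mono Inf_trimmed_avg_le) (auto simp: O_star_def)
  also have "\<dots> \<le> c * (B / real m)"
    using c_ge order_trans[OF trimmed_avg_le_kcost_inliers[OF S_out] divide_right_mono[OF inliers]]
    by (intro mult_left_mono) (auto simp: m_def)
  finally have avg_H: "trimmed_avg S z' H \<le> c * (B / real m)" .
  have "kcost (filter_mset (\<lambda>q. q \<in> Popt) S_in) H \<le> kcost S_in H"
    by (intro kcost_mono_submset multiset_filter_subset)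
  also have "\<dots> = real m * trimmed_avg S z' H"
    using S_in_att S_in_size m_pos by (simp add: m_def field_simps)
  also have "\<dots> \<le> c * B"
    using avg_H m_pos by (simp add: field_simps)
  finally show ?thesis by (simp add: B_def O_star_def algebra_simps)
qed

end
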